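(* Let $f_0,f_1\in \mathrm{PL}_0(\mathbf{I})$ satisfy $[f_1^{f_0},f_0f_1^{-1}]=1$ and $[f_0f_1^{-1},f_1^{f_0^2}]=1$. If $A$ is an orbital of both $f_0$ and $f_1$, then $f_0$ and $f_1$ commute on $A$, i.e. $(f_0f_1)|_A=(f_1f_0)|_A$.
   Context: $\mathrm{PL}_0(\mathbf{I})$ is the group of orientation-preserving piecewise-linear homeomorphisms of $[0,1]$ with finitely many points of non-differentiability. Functions act on the right: $tf=f(t)$, $fg=g\circ f$, $a^b=b^{-1}ab$, $[a,b]=aba^{-1}b^{-1}$. The orbitals of $f$ are the connected components (open intervals) of $\operatorname{Supp}(f)=\{x: xf\ne x\}$. *)

theory Defs
  imports "HOL-Analysis.Analysis"
begin

text \<open>Elements of PL_0(I) are represented as functions real => real that are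
  the identity outside [0,1] (so that they are bijections of the real line and
  composition / inverse are the usual ones).\<close>

definition PL0 :: "(real \<Rightarrow> real) \<Rightarrow> bool" where
  "PL0 f \<longleftrightarrow>
     continuous_on {0..1} f \<and> strict_mono_on {0..1} f \<and> f 0 = 0 \<and> f 1 = 1 \<and>
     (\<forall>x. x \<notin> {0..1} \<longrightarrow> f x = x) \<and>
     (\<exists>B. finite B \<and> B \<subseteq> {0..1} \<and>
        (\<forall>a b. 0 \<le> a \<and> a < b \<and> b \<le> 1 \<and> {a<..<b} \<inter> B = {} \<longrightarrow>
           (\<exists>m c. \<forall>x\<in>{a..b}. f x = m * x + c)))"

text \<open>Right actions: t(fg) = g(f(t)).\<close>
definition rmul :: "(real \<Rightarrow> real) \<Rightarrow> (real \<Rightarrow> real) \<Rightarrow> (real \<Rightarrow> real)" where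
  "rmul f g = g \<circ> f"

definition rinv :: "(real \<Rightarrow> real) \<Rightarrow> (real \<Rightarrow> real)" where
  "rinv f = inv f"

definition rconj :: "(real \<Rightarrow> real) \<Rightarrow> (real \<Rightarrow> real) \<Rightarrow> (real \<Rightarrow> real)" where
  "rconj a b = rmul (rmul (rinv b) a) b"

definition rcomm :: "(real \<Rightarrow> real) \<Rightarrow> (real \<Rightarrow> real) \<Rightarrow> (real \<Rightarrow> real)" where
  "rcomm a b = rmul (rmul (rmul a b) (rinv a)) (rinv b)"

definition supp :: "(real \<Rightarrow> real) \<Rightarrow> real set" where
  "supp f = {x. f x \<noteq> x}"

definition orbitals :: "(real \<Rightarrow> real) \<Rightarrow> real set set" where
  "orbitals f = components (supp f)"

end

theory Submission imports Defs begin

text \<open>Let (a,d) be the common orbital. Near a, f0 and f1 are linear with slopes m0 and m1.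
  If h is a homeomorphism with orbital (a,d), then every point of (a,d) is carried arbitrarily
  close to a by positive or negative powers of h, so two maps commuting with h that agree near a
  agree on all of (a,d). The relations say that g = f0 f1^-1 commutes with h1 = f1^f0 and with
  h2 = f1^(f0^2), and (a,d) is an orbital of h1.
  If m0 = m1, then g is the identity near a, hence on (a,d), so f0 = f1 there.
  Otherwise g has slope m0/m1 \<noteq> 1 at a, so its fixed points in (a,d), an h1-invariant set, must be
  absent, and (a,d) is an orbital of g. Then h1 h2 and h2 h1 commute with g and agree near a,
  so h1 and h2 commute on (a,d); having the same slope m1 at a they coincide there, and
  h1 = h2 is the identity f0 f1 = f1 f0 conjugated by f0.\<close>

lemma PL0_strict_mono:
  assumes "PL0 f" shows "strict_mono f"
proof -
  from assms have sm: "strict_mono_on {0..1} f" and f0: "f 0 = 0" and f1: "f 1 = 1"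
    and out: "\<And>x. x \<notin> {0..1} \<Longrightarrow> f x = x" unfolding PL0_def by auto
  have unit: "0 \<le> f x \<and> f x \<le> 1" if "x \<in> {0..1}" for x
    using that strict_mono_onD[OF sm, of 0 x] strict_mono_onD[OF sm, of x 1] f0 f1
    by (cases "x = 0"; cases "x = 1") auto
  show ?thesis
  proof (rule strict_monoI)
    fix x y :: real assume "x < y"
    then show "f x < f y"
      using unit[of x] unit[of y] out[of x] out[of y] strict_mono_onD[OF sm, of x y]
        f0 f1 strict_mono_onD[OF sm, of 0 y] strict_mono_onD[OF sm, of x 1]
      by (cases "x \<in> {0..1}"; cases "y \<in> {0..1}") (auto simp: not_le)
  qed
qed

lemma PL0_image_unit_interval:
  assumes "PL0 f" shows "f ` {0..1} = {0..1}"
proof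
  have m: "strict_mono f" and f0: "f 0 = 0" and f1: "f 1 = 1"
    using assms PL0_strict_mono unfolding PL0_def by auto
  show "f ` {0..1} \<subseteq> {0..1}"
  proof
    fix y assume "y \<in> f ` {0..1}"
    then obtain x where "x \<in> {0..1}" "y = f x" by blast
    then show "y \<in> {0..1}"
      using strict_mono_less_eq[OF m, of 0 x] strict_mono_less_eq[OF m, of x 1] f0 f1 by auto
  qed
  show "{0..1} \<subseteq> f ` {0..1}"
  proof
    fix y :: real assume "y \<in> {0..1}"
    then obtain x where "0 \<le> x" "x \<le> 1" "f x = y"
      using IVT'[of f 0 y 1] assms f0 f1 unfolding PL0_def by auto
    then show "y \<in> f ` {0..1}" by force
  qed
qed

lemma PL0_surj:
  assumes "PL0 f" shows "surj f"
proof -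
  have "y \<in> range f" for y
  proof (cases "y \<in> {0..1}")
    case True
    then show ?thesis using PL0_image_unit_interval[OF assms] by blast
  next
    case False
    then have "f y = y" using assms unfolding PL0_def by blast
    then show ?thesis by (metis rangeI)
  qed
  then show ?thesis by blast
qed

lemma PL0_continuous:
  assumes "PL0 f" shows "continuous_on UNIV f"
proof -
  have "f x = x" if "x \<in> {..0} \<union> {1..}" for x
    using assms that unfolding PL0_def by (cases "x \<in> {0..1}") auto
  then have "continuous_on ({..0} \<union> {1..}) f"
    using continuous_on_cong[OF refl] continuous_on_id by metis
  moreover have "continuous_on {0..1} f" using assms unfolding PL0_def by blast
  ultimately have "continuous_on ({0..1} \<union> ({..0} \<union> {1..})) f"
    using continuous_on_closed_Un[of "{0..1}" "{..0} \<union> {1..}" f] by auto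
  moreover have "{0..1} \<union> ({..0} \<union> {1..}) = (UNIV :: real set)" by auto
  ultimately show ?thesis by simp
qed

text \<open>PL0 is closed under composition and inversion only up to tracking breakpoints; the
  dynamical arguments need nothing but this coarser class, whose closure properties are immediate.\<close>

definition unit_homeo :: "(real \<Rightarrow> real) \<Rightarrow> bool" where
  "unit_homeo f \<longleftrightarrow>
     bij f \<and> strict_mono f \<and> continuous_on {0..1} f \<and> f ` {0..1} = {0..1}"

lemma PL0_unit_homeo:
  assumes "PL0 f" shows "unit_homeo f"
proof -
  have "bij f"
    using PL0_surj[OF assms] strict_mono_imp_inj_on[OF PL0_strict_mono[OF assms]]
    by (simp add: bij_def)
  then show ?thesis
    using assms PL0_strict_mono PL0_image_unit_interval unfolding unit_homeo_def PL0_def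
    by blast
qed

lemma unit_homeo_comp:
  assumes "unit_homeo f" "unit_homeo g" shows "unit_homeo (f \<circ> g)"
proof -
  have f: "bij f" "strict_mono f" "continuous_on {0..1} f" "f ` {0..1} = {0..1}"
    and g: "bij g" "strict_mono g" "continuous_on {0..1} g" "g ` {0..1} = {0..1}"
    using assms unfolding unit_homeo_def by auto
  have "continuous_on {0..1} (f \<circ> g)"
    using continuous_on_compose[OF g(3)] f(3) g(4) by simp
  moreover have "(f \<circ> g) ` {0..1} = {0..1}"
    using f(4) g(4) by (simp only: image_comp[symmetric])
  moreover have "strict_mono (f \<circ> g)"
    using f(2) g(2) by (simp add: strict_mono_def)
  ultimately show ?thesis
    using bij_comp[OF g(1) f(1)] unfolding unit_homeo_def by blast
qed

lemma unit_homeo_inv: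
  assumes "unit_homeo f" shows "unit_homeo (inv f)"
proof -
  have b: "bij f" and m: "strict_mono f" and c: "continuous_on {0..1} f"
    and i: "f ` {0..1} = {0..1}" using assms unfolding unit_homeo_def by auto
  have "strict_mono (inv f)"
  proof (rule strict_monoI)
    fix x y :: real assume "x < y"
    then show "inv f x < inv f y"
      using strict_mono_less[OF m, of "inv f x" "inv f y"]
      by (simp add: bij_is_surj[OF b] surj_f_inv_f)
  qed
  moreover have "continuous_on {0..1} (inv f)"
    using continuous_on_inv[OF c compact_Icc, of "inv f"] i by (simp add: bij_is_inj[OF b])
  moreover have "inv f ` {0..1} = {0..1}"
    using image_inv_f_f[OF bij_is_inj[OF b], of "{0..1}"] i by simp
  ultimately show ?thesis
    using bij_imp_bij_inv[OF b] unfolding unit_homeo_def by blast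
qed

lemma unit_homeo_inv_fixed: "unit_homeo f \<Longrightarrow> f a = a \<Longrightarrow> inv f a = a"
  unfolding unit_homeo_def by (metis bij_is_inj inv_f_f)

lemma strict_mono_maps_greaterThanLessThan:
  "strict_mono h \<Longrightarrow> h a = a \<Longrightarrow> h d = d \<Longrightarrow> x \<in> {a<..<d} \<Longrightarrow> h x \<in> {a<..<d}"
  using strict_monoD[of h a x] strict_monoD[of h x d] by auto

definition orbital_interval :: "(real \<Rightarrow> real) \<Rightarrow> real \<Rightarrow> real \<Rightarrow> bool" where
  "orbital_interval g a d \<longleftrightarrow>
     unit_homeo g \<and> 0 \<le> a \<and> a < d \<and> d \<le> 1 \<and> g a = a \<and> g d = d \<and>
     (\<forall>x\<in>{a<..<d}. g x \<noteq> x)"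

lemma orbital_interval_maps:
  "orbital_interval g a d \<Longrightarrow> x \<in> {a<..<d} \<Longrightarrow> g x \<in> {a<..<d}"
  unfolding orbital_interval_def unit_homeo_def
  using strict_mono_maps_greaterThanLessThan by blast

lemma orbital_interval_inv:
  assumes "orbital_interval g a d" shows "orbital_interval (inv g) a d"
proof -
  have g: "unit_homeo g" "g a = a" "g d = d" "\<forall>x\<in>{a<..<d}. g x \<noteq> x"
    using assms unfolding orbital_interval_def by auto
  have "inv g x \<noteq> x" if "x \<in> {a<..<d}" for x
    using g(1,4) that unfolding unit_homeo_def by (metis bij_inv_eq_iff)
  then show ?thesis
    using assms unit_homeo_inv[OF g(1)] unit_homeo_inv_fixed[OF g(1)] g(2,3)
    unfolding orbital_interval_def by auto
qed

lemma orbital_interval_conj: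
  assumes f: "orbital_interval f a d" and h: "unit_homeo h" "h a = a" "h d = d"
  shows "orbital_interval (h \<circ> f \<circ> inv h) a d"
proof -
  have hi: "inv h a = a" "inv h d = d"
    using unit_homeo_inv_fixed[OF h(1)] h(2,3) by auto
  have "h (f (inv h x)) \<noteq> x" if x: "x \<in> {a<..<d}" for x
  proof
    assume "h (f (inv h x)) = x"
    then have "f (inv h x) = inv h x"
      using h(1) unfolding unit_homeo_def by (metis bij_inv_eq_iff)
    moreover have "inv h x \<in> {a<..<d}"
      using unit_homeo_inv[OF h(1)] hi x strict_mono_maps_greaterThanLessThan
      unfolding unit_homeo_def by blast
    ultimately show False using f unfolding orbital_interval_def by blast
  qed
  moreover have "unit_homeo (h \<circ> f \<circ> inv h)"
    using f h(1) unit_homeo_inv unit_homeo_comp unfolding orbital_interval_def by metis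
  ultimately show ?thesis
    using f h(2,3) hi unfolding orbital_interval_def by auto
qed

lemma open_connected_eq_greaterThanLessThan:
  fixes S :: "real set"
  assumes "open S" "connected S" "bdd_below S" "bdd_above S" "S \<noteq> {}"
  shows "S = {Inf S<..<Sup S}"
proof
  show "S \<subseteq> {Inf S<..<Sup S}"
  proof
    fix x assume x: "x \<in> S"
    then obtain e where e: "e > 0" "ball x e \<subseteq> S" using assms(1) openE by blast
    then have "x - e/2 \<in> S" "x + e/2 \<in> S" by (auto simp: dist_real_def)
    then have "Inf S \<le> x - e/2" "x + e/2 \<le> Sup S"
      using cInf_lower[OF _ assms(3)] cSup_upper[OF _ assms(4)] by auto
    then show "x \<in> {Inf S<..<Sup S}" using e(1) by simp
  qed
  show "{Inf S<..<Sup S} \<subseteq> S"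
  proof
    fix x assume "x \<in> {Inf S<..<Sup S}"
    then obtain y z where "y \<in> S" "y < x" "z \<in> S" "x < z"
      using cInf_less_iff[OF assms(5,3)] less_cSup_iff[OF assms(5,4)] by auto
    then show "x \<in> S" using assms(2) connected_iff_interval[of S] by fastforce
  qed
qed

lemma PL0_orbital_interval:
  assumes f: "PL0 f" and A: "A \<in> orbitals f"
  shows "\<exists>a d. A = {a<..<d} \<and> orbital_interval f a d"
proof -
  have comp: "A \<in> components (supp f)" using A by (simp add: orbitals_def)
  have open_supp: "open (supp f)" unfolding supp_def
    by (rule open_Collect_neq[OF PL0_continuous[OF f] continuous_on_id])
  have "supp f \<subseteq> {0..1}" using f unfolding PL0_def supp_def by blast
  then have A01: "A \<subseteq> {0..1}" using in_components_subset[OF comp] by blast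
  define a d where "a = Inf A" and "d = Sup A"
  have "A \<noteq> {}" using comp in_components_nonempty by blast
  then have Aeq: "A = {a<..<d}" unfolding a_def d_def
    using open_connected_eq_greaterThanLessThan open_components[OF open_supp comp]
      in_components_connected[OF comp] bdd_below_mono[OF bdd_below_Icc A01]
      bdd_above_mono[OF bdd_above_Icc A01] by blast
  with \<open>A \<noteq> {}\<close> have ad: "a < d" by auto
  moreover have "0 \<le> a" "d \<le> 1"
    using A01 ad unfolding Aeq by (auto simp: greaterThanLessThan_subseteq_atLeastAtMost_iff)
  moreover have "f a = a" "f d = d"
  proof -
    have "a \<in> frontier A" "d \<in> frontier A"
      using ad unfolding Aeq frontier_def by auto
    then have "a \<notin> supp f" "d \<notin> supp f"
      using frontier_of_components_subset[OF comp] open_supp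
      by (auto simp: frontier_def interior_open)
    then show "f a = a" "f d = d" unfolding supp_def by auto
  qed
  moreover have "\<forall>x\<in>A. f x \<noteq> x"
    using in_components_subset[OF comp] unfolding supp_def by blast
  ultimately show ?thesis
    using PL0_unit_homeo[OF f] Aeq unfolding orbital_interval_def by auto
qed

definition linear_right_germ :: "(real \<Rightarrow> real) \<Rightarrow> real \<Rightarrow> real \<Rightarrow> bool" where
  "linear_right_germ f a m \<longleftrightarrow> m > 0 \<and> (\<exists>\<delta>>0. \<forall>x\<in>{a..a+\<delta>}. f x = a + m * (x - a))"

lemma PL0_linear_right_germ:
  assumes f: "PL0 f" and a: "0 \<le> a" "a < 1" "f a = a"
  shows "\<exists>m. linear_right_germ f a m"
proof -
  obtain B where B: "finite B" and lin: "\<forall>a b. 0 \<le> a \<and> a < b \<and> b \<le> 1 \<and> {a<..<b} \<inter> B = {} \<longrightarrow>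
           (\<exists>m c. \<forall>x\<in>{a..b}. f x = m * x + c)"
    using f unfolding PL0_def by blast
  obtain e where e: "e > 0" "\<forall>x\<in>B. x \<noteq> a \<longrightarrow> e \<le> dist a x"
    using finite_set_avoid[OF B] by blast
  define \<delta> where "\<delta> = min e (1 - a)"
  have \<delta>: "\<delta> > 0" "a + \<delta> \<le> 1" using e a unfolding \<delta>_def by auto
  have "x \<notin> B" if "a < x" "x < a + \<delta>" for x
    using that e unfolding \<delta>_def by (auto simp: dist_real_def)
  then have "{a<..<a+\<delta>} \<inter> B = {}" by auto
  then obtain m c where mc: "\<forall>x\<in>{a..a+\<delta>}. f x = m * x + c"
    using lin[rule_format, of a "a + \<delta>"] a(1) \<delta> by auto
  then have c: "c = a - m * a" using mc[rule_format, of a] a(3) \<delta>(1) by simp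
  then have lin_a: "\<forall>x\<in>{a..a+\<delta>}. f x = a + m * (x - a)"
    using mc by (simp add: algebra_simps)
  have "a < f (a + \<delta>)"
    using strict_monoD[OF PL0_strict_mono[OF f], of a "a + \<delta>"] a(3) \<delta>(1) by simp
  then have "0 < m * \<delta>" using lin_a \<delta>(1) by simp
  then have "m > 0" using \<delta>(1) by (simp add: zero_less_mult_iff)
  then show ?thesis unfolding linear_right_germ_def using lin_a \<delta>(1) by blast
qed

lemma linear_right_germ_id: "linear_right_germ id a 1"
  unfolding linear_right_germ_def by (auto intro: exI[of _ 1])

lemma linear_right_germ_comp:
  assumes "linear_right_germ f a m" "linear_right_germ g a n"
  shows "linear_right_germ (f \<circ> g) a (m * n)"
proof -
  obtain \<delta>f where \<delta>f: "\<delta>f > 0" "\<forall>x\<in>{a..a+\<delta>f}. f x = a + m * (x - a)" and m: "m > 0"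
    using assms(1) unfolding linear_right_germ_def by blast
  obtain \<delta>g where \<delta>g: "\<delta>g > 0" "\<forall>x\<in>{a..a+\<delta>g}. g x = a + n * (x - a)" and n: "n > 0"
    using assms(2) unfolding linear_right_germ_def by blast
  define \<delta> where "\<delta> = min \<delta>g (\<delta>f / n)"
  have "f (g x) = a + (m * n) * (x - a)" if x: "x \<in> {a..a+\<delta>}" for x
  proof -
    have "x - a \<le> \<delta>f / n" using x unfolding \<delta>_def by auto
    then have "n * (x - a) \<le> \<delta>f" using n by (simp add: field_simps)
    then have "g x \<in> {a..a+\<delta>f}" using x n \<delta>g unfolding \<delta>_def by auto
    then show ?thesis using x \<delta>f \<delta>g unfolding \<delta>_def by auto
  qed
  moreover have "\<delta> > 0" using \<delta>f \<delta>g n unfolding \<delta>_def by simp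
  ultimately show ?thesis unfolding linear_right_germ_def using m n by auto
qed

lemma linear_right_germ_inv:
  assumes "bij f" "linear_right_germ f a m" shows "linear_right_germ (inv f) a (1 / m)"
proof -
  obtain \<delta> where \<delta>: "\<delta> > 0" "\<forall>x\<in>{a..a+\<delta>}. f x = a + m * (x - a)" and m: "m > 0"
    using assms(2) unfolding linear_right_germ_def by blast
  have "inv f y = a + (1/m) * (y - a)" if y: "y \<in> {a..a + m * \<delta>}" for y
  proof -
    have "a + (1/m) * (y - a) \<in> {a..a+\<delta>}"
      using y m by (auto simp: field_simps)
    then have "f (a + (1/m) * (y - a)) = y" using \<delta>(2) m by simp
    then show ?thesis using assms(1) by (metis bij_inv_eq_iff)
  qed
  then show ?thesis unfolding linear_right_germ_def using m \<delta>(1) by (auto intro!: exI[of _ "m * \<delta>"])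
qed

lemma linear_right_germ_conj:
  assumes "bij h" "linear_right_germ h a k" "linear_right_germ f a m"
  shows "linear_right_germ (h \<circ> f \<circ> inv h) a m"
proof -
  have "k > 0" using assms(2) unfolding linear_right_germ_def by blast
  then show ?thesis
    using linear_right_germ_comp[OF linear_right_germ_comp[OF assms(2,3)] linear_right_germ_inv[OF assms(1,2)]]
    by simp
qed

lemma linear_right_germ_eventually:
  assumes "linear_right_germ f a m"
  shows "eventually (\<lambda>x. f x = a + m * (x - a)) (at_right a)"
proof -
  obtain \<delta> where "\<delta> > 0" "\<forall>x\<in>{a..a+\<delta>}. f x = a + m * (x - a)"
    using assms unfolding linear_right_germ_def by blast
  then show ?thesis unfolding eventually_at_right_field
    by (intro exI[of _ "a + \<delta>"]) auto
qed

lemma linear_right_germ_eventually_eq: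
  assumes "linear_right_germ f a m" "linear_right_germ g a m"
  shows "eventually (\<lambda>x. f x = g x) (at_right a)"
  using linear_right_germ_eventually[OF assms(1)] linear_right_germ_eventually[OF assms(2)]
  by eventually_elim simp

lemma orbital_interval_maps_funpow:
  "orbital_interval g a d \<Longrightarrow> x \<in> {a<..<d} \<Longrightarrow> (g^^n) x \<in> {a<..<d}"
  by (induction n) (use orbital_interval_maps in auto)

lemma funpow_tendsto_left_end:
  assumes g: "orbital_interval g a d" and x: "x \<in> {a<..<d}" and gx: "g x < x"
  shows "(\<lambda>n. (g^^n) x) \<longlonglongrightarrow> a"
proof -
  define s where "s n = (g^^n) x" for n
  have s_Suc: "s (Suc n) = g (s n)" for n by (simp add: s_def)
  have s_in: "s n \<in> {a<..<d}" for n
    unfolding s_def using orbital_interval_maps_funpow[OF g x] .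
  have g_mono: "strict_mono g" using g unfolding orbital_interval_def unit_homeo_def by blast
  have "s (Suc n) < s n" for n
    by (induction n) (use gx strict_monoD[OF g_mono] in \<open>auto simp: s_Suc s_def\<close>)
  then have "decseq s" by (simp add: decseq_SucI less_imp_le)
  moreover have s_lower: "a \<le> s n" for n using s_in[of n] by simp
  ultimately obtain L where L: "s \<longlonglongrightarrow> L" "\<forall>n. L \<le> s n"
    using decseq_convergent[of s a] by blast
  have "a \<le> L" using LIMSEQ_le_const[OF L(1), of a] s_lower by blast
  moreover have "L < d" using L(2) s_in[of 0] by (meson greaterThanLessThan_iff le_less_trans)
  moreover have "g L = L"
  proof -
    have "{a..d} \<subseteq> {0..1}" using g unfolding orbital_interval_def by auto
    then have "continuous_on {a..d} g"
      using g continuous_on_subset unfolding orbital_interval_def unit_homeo_def by blast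
    then have "(\<lambda>n. g (s n)) \<longlonglongrightarrow> g L"
      using \<open>a \<le> L\<close> \<open>L < d\<close> s_in
      by (intro continuous_on_tendsto_compose[OF _ L(1)]) (auto intro!: always_eventually less_imp_le)
    moreover have "(\<lambda>n. g (s n)) \<longlonglongrightarrow> L"
      using LIMSEQ_Suc[OF L(1)] by (simp add: s_Suc)
    ultimately show ?thesis using LIMSEQ_unique by blast
  qed
  ultimately have "L = a" using g unfolding orbital_interval_def by force
  then show ?thesis using L(1) by (simp add: s_def[abs_def])
qed

lemma orbit_approaches_left_end:
  assumes g: "orbital_interval g a d" and x: "x \<in> {a<..<d}" and b: "a < b"
  shows "\<exists>n. (g^^n) x < b \<or> (inv g^^n) x < b"
proof -
  have "\<exists>n. (h^^n) x < b" if h: "orbital_interval h a d" "h x < x" for h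
    using order_tendstoD(2)[OF funpow_tendsto_left_end[OF h(1) x h(2)] b]
    by (auto simp: eventually_sequentially)
  moreover have "g x < x \<or> inv g x < x"
  proof (rule ccontr)
    assume "\<not> (g x < x \<or> inv g x < x)"
    then have "x \<le> g x" "x \<le> inv g x" by auto
    moreover have "g x \<le> x"
    proof -
      have "bij g" "strict_mono g" using g unfolding orbital_interval_def unit_homeo_def by auto
      then have "g x \<le> g (inv g x)" using \<open>x \<le> inv g x\<close> by (simp add: strict_mono_less_eq)
      then show ?thesis using \<open>bij g\<close> by (simp add: bij_is_surj surj_f_inv_f)
    qed
    ultimately have "g x = x" by simp
    then show False using g x unfolding orbital_interval_def by blast
  qed
  ultimately show ?thesis using g orbital_interval_inv by blast
qed

lemma invariant_set_frequently_at_left_end: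
  assumes g: "orbital_interval g a d" and S: "S \<subseteq> {a<..<d}" "S \<noteq> {}"
    and inv_S: "\<forall>x\<in>S. g x \<in> S" "\<forall>x\<in>S. inv g x \<in> S"
  shows "\<exists>\<^sub>F x in at_right a. x \<in> S"
proof -
  have iter: "(h^^n) x \<in> S" if "\<forall>x\<in>S. h x \<in> S" "x \<in> S" for h :: "real \<Rightarrow> real" and n x
    using that by (induction n) auto
  obtain x where x: "x \<in> S" using S(2) by blast
  have "\<exists>y\<in>S. y < b" if "a < b" for b
    using orbit_approaches_left_end[OF g _ that] x S(1) iter[OF inv_S(1) x] iter[OF inv_S(2) x]
    by blast
  then show ?thesis
    using S(1) unfolding frequently_def eventually_at_right_field by fastforce
qed

lemma eq_on_orbital_interval_if_eventually_eq:
  assumes g: "orbital_interval g a d"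
    and u: "\<forall>x\<in>{a<..<d}. g (u x) = u (g x)" and v: "\<forall>x\<in>{a<..<d}. g (v x) = v (g x)"
    and uv: "eventually (\<lambda>x. u x = v x) (at_right a)"
  shows "\<forall>x\<in>{a<..<d}. u x = v x"
proof (rule ccontr)
  define S where "S = {x\<in>{a<..<d}. u x \<noteq> v x}"
  assume "\<not> (\<forall>x\<in>{a<..<d}. u x = v x)"
  then have "S \<noteq> {}" unfolding S_def by blast
  have b: "bij g" using g unfolding orbital_interval_def unit_homeo_def by blast
  have "\<forall>x\<in>S. g x \<in> S"
  proof
    fix x assume x: "x \<in> S"
    then have "g (u x) \<noteq> g (v x)" using inj_eq[OF bij_is_inj[OF b]] unfolding S_def by simp
    then show "g x \<in> S" using x u v orbital_interval_maps[OF g] unfolding S_def by auto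
  qed
  moreover have "\<forall>x\<in>S. inv g x \<in> S"
  proof
    fix x assume x: "x \<in> S"
    have "inv g x \<in> {a<..<d}" using x orbital_interval_maps[OF orbital_interval_inv[OF g]]
      unfolding S_def by blast
    moreover have "g (inv g x) = x" using b by (simp add: bij_is_surj surj_f_inv_f)
    ultimately have "g (u (inv g x)) = u x" "g (v (inv g x)) = v x"
      using u[rule_format, of "inv g x"] v[rule_format, of "inv g x"] by simp_all
    then show "inv g x \<in> S" using x \<open>inv g x \<in> {a<..<d}\<close> unfolding S_def by auto
  qed
  ultimately have "\<exists>\<^sub>F x in at_right a. x \<in> S"
    using invariant_set_frequently_at_left_end[OF g _ \<open>S \<noteq> {}\<close>] unfolding S_def by blast
  moreover have "eventually (\<lambda>x. x \<notin> S) (at_right a)"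
    using uv by (rule eventually_mono) (simp add: S_def)
  ultimately show False by (simp add: frequently_def)
qed

lemma orbital_interval_of_commuting:
  assumes h: "orbital_interval h a d"
    and g: "unit_homeo g" "g a = a" "g d = d" "g \<circ> h = h \<circ> g"
    and germ: "linear_right_germ g a c" "c \<noteq> 1"
  shows "orbital_interval g a d"
proof -
  define S where "S = {x\<in>{a<..<d}. g x = x}"
  have b: "bij h" using h unfolding orbital_interval_def unit_homeo_def by blast
  have comm: "g (h x) = h (g x)" for x using fun_cong[OF g(4), of x] by simp
  have "\<forall>x\<in>S. h x \<in> S"
    using comm orbital_interval_maps[OF h] unfolding S_def by auto
  moreover have "\<forall>x\<in>S. inv h x \<in> S"
  proof
    fix x assume x: "x \<in> S"
    have ix: "inv h x \<in> {a<..<d}" using x orbital_interval_maps[OF orbital_interval_inv[OF h]]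
      unfolding S_def by blast
    have "h (g (inv h x)) = h (inv h x)"
      using x comm[of "inv h x"] b unfolding S_def by (simp add: bij_is_surj surj_f_inv_f)
    then have "g (inv h x) = inv h x" using inj_eq[OF bij_is_inj[OF b]] by simp
    then show "inv h x \<in> S" using ix unfolding S_def by blast
  qed
  moreover have "\<not> (\<exists>\<^sub>F x in at_right a. x \<in> S)"
  proof
    assume "\<exists>\<^sub>F x in at_right a. x \<in> S"
    then have "\<exists>\<^sub>F x in at_right a. g x = a + c * (x - a) \<and> x \<in> S"
      using linear_right_germ_eventually[OF germ(1)] frequently_eventually_conj by blast
    then obtain x where x: "g x = a + c * (x - a)" "x \<in> S" using frequently_ex by blast
    then have "(c - 1) * (x - a) = 0" unfolding S_def by (simp add: algebra_simps)
    then show False using germ(2) x(2) unfolding S_def by simp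
  qed
  ultimately have "S = {}"
    using invariant_set_frequently_at_left_end[OF h, of S] unfolding S_def by blast
  then show ?thesis using g h unfolding orbital_interval_def S_def by auto
qed

lemma eq_on_orbital_interval_of_commuting:
  assumes g: "orbital_interval g a d" and h1: "orbital_interval h1 a d"
    and comm: "g \<circ> h1 = h1 \<circ> g" "g \<circ> h2 = h2 \<circ> g"
    and germs: "linear_right_germ h1 a m" "linear_right_germ h2 a m"
  shows "\<forall>x\<in>{a<..<d}. h1 x = h2 x"
proof -
  have "g (h1 y) = h1 (g y)" "g (h2 y) = h2 (g y)" for y
    using fun_cong[OF comm(1), of y] fun_cong[OF comm(2), of y] by simp_all
  then have "\<forall>x\<in>{a<..<d}. g ((h1 \<circ> h2) x) = (h1 \<circ> h2) (g x)"
    "\<forall>x\<in>{a<..<d}. g ((h2 \<circ> h1) x) = (h2 \<circ> h1) (g x)"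
    by simp_all
  moreover have "eventually (\<lambda>x. (h1 \<circ> h2) x = (h2 \<circ> h1) x) (at_right a)"
    using linear_right_germ_comp[OF germs] linear_right_germ_comp[OF germs(2,1)]
    by (rule linear_right_germ_eventually_eq)
  ultimately have "\<forall>x\<in>{a<..<d}. (h1 \<circ> h2) x = (h2 \<circ> h1) x"
    by (rule eq_on_orbital_interval_if_eventually_eq[OF g])
  then have "\<forall>x\<in>{a<..<d}. h1 (h2 x) = h2 (h1 x)" by simp
  with eq_on_orbital_interval_if_eventually_eq[OF h1 _ _ linear_right_germ_eventually_eq[OF germs]]
  show ?thesis by simp
qed

lemma rcomm_eq_id_iff:
  assumes "bij f" "bij g" shows "rcomm f g = id \<longleftrightarrow> g \<circ> f = f \<circ> g"
proof -
  have "rcomm f g = inv (f \<circ> g) \<circ> (g \<circ> f)"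
    using o_inv_distrib[OF assms] by (simp add: rcomm_def rmul_def rinv_def comp_assoc)
  moreover have "inv (f \<circ> g) y = x \<longleftrightarrow> (f \<circ> g) x = y" for x y
    using bij_inv_eq_iff[OF bij_comp[OF assms(2,1)]] by metis
  ultimately show ?thesis by (auto simp: fun_eq_iff)
qed

lemma eq_id_on_orbital_interval_of_commuting:
  assumes h: "orbital_interval h a d" and comm: "g \<circ> h = h \<circ> g"
    and germ: "linear_right_germ g a 1"
  shows "\<forall>x\<in>{a<..<d}. g x = x"
proof -
  have "\<forall>x\<in>{a<..<d}. h (g x) = g (h x)" "\<forall>x\<in>{a<..<d}. h (id x) = id (h x)"
    using fun_cong[OF comm] by auto
  moreover have "eventually (\<lambda>x. g x = id x) (at_right a)"
    using linear_right_germ_eventually_eq[OF germ linear_right_germ_id] .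
  ultimately have "\<forall>x\<in>{a<..<d}. g x = id x"
    by (rule eq_on_orbital_interval_if_eventually_eq[OF h])
  then show ?thesis by simp
qed

lemma commute_on_orbital_interval:
  assumes f0: "orbital_interval f0 a d" and f1: "orbital_interval f1 a d"
    and germs: "linear_right_germ f0 a m0" "linear_right_germ f1 a m1"
    and defs: "g = inv f1 \<circ> f0" "h1 = f0 \<circ> f1 \<circ> inv f0" "h2 = (f0 \<circ> f0) \<circ> f1 \<circ> inv (f0 \<circ> f0)"
    and comm: "g \<circ> h1 = h1 \<circ> g" "g \<circ> h2 = h2 \<circ> g"
  shows "\<forall>x\<in>{a<..<d}. f0 (f1 x) = f1 (f0 x)"
  \<comment> \<open>In the right-action notation of the statement, g = f0 f1^-1, h1 = f1^f0, h2 = f1^(f0^2).\<close>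
proof -
  have u0: "unit_homeo f0" "f0 a = a" "f0 d = d" and u1: "unit_homeo f1" "f1 a = a" "f1 d = d"
    using f0 f1 unfolding orbital_interval_def by auto
  have b0: "bij f0" and b1: "bij f1" using u0 u1 unfolding unit_homeo_def by auto
  have h1: "orbital_interval h1 a d" unfolding defs
    using orbital_interval_conj[OF f1 u0] by (simp add: comp_assoc)
  have m_pos: "m0 > 0" "m1 > 0" using germs unfolding linear_right_germ_def by auto
  have germ_g: "linear_right_germ g a (m0 / m1)" unfolding defs
    using linear_right_germ_comp[OF linear_right_germ_inv[OF b1 germs(2)] germs(1)] by simp
  have germ_h: "linear_right_germ h1 a m1" "linear_right_germ h2 a m1" unfolding defs
    using linear_right_germ_conj[OF b0 germs] bij_comp[OF b0 b0]
      linear_right_germ_conj[OF _ linear_right_germ_comp[OF germs(1,1)] germs(2)] by auto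
  show ?thesis
  proof (cases "m0 = m1")
    case True
    then have "\<forall>x\<in>{a<..<d}. g x = x"
      using eq_id_on_orbital_interval_of_commuting[OF h1 comm(1)] germ_g m_pos by simp
    then have "\<forall>x\<in>{a<..<d}. f0 x = f1 x"
      unfolding defs using b1 by (simp add: bij_inv_eq_iff eq_commute)
    then show ?thesis using orbital_interval_maps[OF f0] orbital_interval_maps[OF f1] by simp
  next
    case False
    have "orbital_interval g a d"
    proof (rule orbital_interval_of_commuting[OF h1 _ _ _ comm(1) germ_g])
      show "unit_homeo g" unfolding defs using unit_homeo_comp unit_homeo_inv u0 u1 by blast
      show "g a = a" "g d = d" unfolding defs using unit_homeo_inv_fixed u0 u1 by auto
      show "m0 / m1 \<noteq> 1" using False m_pos by simp
    qed
    then have h12: "\<forall>x\<in>{a<..<d}. h1 x = h2 x"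
      using eq_on_orbital_interval_of_commuting[OF _ h1 comm germ_h] by blast
    show ?thesis
    proof
      fix x assume "x \<in> {a<..<d}"
      then have "h1 (f0 (f0 x)) = h2 (f0 (f0 x))"
        using h12 orbital_interval_maps[OF f0] by simp
      then have "f0 (f1 (f0 x)) = f0 (f0 (f1 x))"
        unfolding defs using b0 by (simp add: o_inv_distrib bij_is_inj)
      then show "f0 (f1 x) = f1 (f0 x)" using b0 by (simp add: bij_is_inj inj_eq)
    qed
  qed
qed

theorem lemma2p2:
  fixes f0 f1 :: "real \<Rightarrow> real" and A :: "real set"
  assumes "PL0 f0" and "PL0 f1"
    and "rcomm (rconj f1 f0) (rmul f0 (rinv f1)) = id"
    and "rcomm (rmul f0 (rinv f1)) (rconj f1 (rmul f0 f0)) = id"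
    and "A \<in> orbitals f0" and "A \<in> orbitals f1"
  shows "\<forall>x\<in>A. rmul f0 f1 x = rmul f1 f0 x"
proof -
  obtain a d where A: "A = {a<..<d}" and orb0: "orbital_interval f0 a d"
    using PL0_orbital_interval[OF assms(1,5)] by blast
  obtain a' d' where A': "A = {a'<..<d'}" and orb1: "orbital_interval f1 a' d'"
    using PL0_orbital_interval[OF assms(2,6)] by blast
  have "a < d" "a' < d'" using orb0 orb1 unfolding orbital_interval_def by auto
  then have "a' = a" "d' = d"
    using A A' cInf_greaterThanLessThan cSup_greaterThanLessThan by metis+
  with orb1 have orb1: "orbital_interval f1 a d" by simp
  have "0 \<le> a" "a < 1" "f0 a = a" "f1 a = a"
    using orb0 orb1 unfolding orbital_interval_def by auto
  then obtain m0 m1 where "linear_right_germ f0 a m0" "linear_right_germ f1 a m1"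
    using PL0_linear_right_germ[OF assms(1)] PL0_linear_right_germ[OF assms(2)] by blast
  moreover have "bij f0" "bij f1"
    using orb0 orb1 unfolding orbital_interval_def unit_homeo_def by auto
  then have "bij (rconj f1 f0)" "bij (rmul f0 (rinv f1))" "bij (rconj f1 (rmul f0 f0))"
    unfolding rconj_def rmul_def rinv_def by (auto intro!: bij_comp bij_imp_bij_inv)
  then have "rmul f0 (rinv f1) \<circ> rconj f1 f0 = rconj f1 f0 \<circ> rmul f0 (rinv f1)"
    "rmul f0 (rinv f1) \<circ> rconj f1 (rmul f0 f0) = rconj f1 (rmul f0 f0) \<circ> rmul f0 (rinv f1)"
    using assms(3,4) rcomm_eq_id_iff by auto
  ultimately show ?thesis
    using commute_on_orbital_interval[OF orb0 orb1] A
    by (simp add: rconj_def rmul_def rinv_def comp_assoc)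
qed

end
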